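(* Let $k$ and $r$ be positive integers, let $G$ be a graph with $\chi(G)\le r$, and let $P\subset V(G)$. Suppose $|\mathcal{D}_G(P,3)|\le \frac{1}{2}k(k+1)$. Then for each precoloring $d\colon P\to[r+1]$ of $P$ in $G$, there exists a proper coloring $f\colon V(G)\to[r+k]$ of $G$ with $f(u)=d(u)$ for each $u\in P$.
   Context: For a graph $G$, $P\subset V(G)$ and a positive integer $k$, $\mathcal{D}_G(P,k)=\{\{x,y\}\subset P: x\ne y,\ d_G(x,y)\le k\}$, where $d_G$ is the distance in $G$. For a positive integer $m$, $[m]=\{1,\dots,m\}$. A precoloring of $P$ in $G$ is a proper coloring of the induced subgraph $G[P]$. *)

theory Defs
  imports Main
begin

definition graph :: "'a set \<Rightarrow> ('a \<Rightarrow> 'a \<Rightarrow> bool) \<Rightarrow> bool" where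
  "graph V E \<longleftrightarrow> finite V \<and> (\<forall>u v. E u v \<longrightarrow> u \<in> V \<and> v \<in> V)
     \<and> (\<forall>u v. E u v \<longrightarrow> E v u) \<and> (\<forall>u. \<not> E u u)"

inductive walk :: "('a \<Rightarrow> 'a \<Rightarrow> bool) \<Rightarrow> 'a \<Rightarrow> 'a \<Rightarrow> nat \<Rightarrow> bool" for E where
  walk_refl: "walk E x x 0"
| walk_step: "E x y \<Longrightarrow> walk E y z n \<Longrightarrow> walk E x z (Suc n)"

definition dist_le :: "('a \<Rightarrow> 'a \<Rightarrow> bool) \<Rightarrow> 'a \<Rightarrow> 'a \<Rightarrow> nat \<Rightarrow> bool" where
  "dist_le E x y k \<longleftrightarrow> (\<exists>n\<le>k. walk E x y n)"

definition close_pairs :: "('a \<Rightarrow> 'a \<Rightarrow> bool) \<Rightarrow> 'a set \<Rightarrow> nat \<Rightarrow> 'a set set" where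
  "close_pairs E P k = {{x, y} | x y. x \<in> P \<and> y \<in> P \<and> x \<noteq> y \<and> dist_le E x y k}"

definition proper_coloring_on ::
  "'a set \<Rightarrow> ('a \<Rightarrow> 'a \<Rightarrow> bool) \<Rightarrow> ('a \<Rightarrow> nat) \<Rightarrow> nat set \<Rightarrow> bool" where
  "proper_coloring_on S E f C \<longleftrightarrow> (\<forall>v\<in>S. f v \<in> C) \<and> (\<forall>u\<in>S. \<forall>v\<in>S. E u v \<longrightarrow> f u \<noteq> f v)"

definition chromatic_le :: "'a set \<Rightarrow> ('a \<Rightarrow> 'a \<Rightarrow> bool) \<Rightarrow> nat \<Rightarrow> bool" where
  "chromatic_le V E r \<longleftrightarrow> (\<exists>f. proper_coloring_on V E f {1..r})"

end

theory Submission
  imports Defs "HOL-Combinatorics.Transposition"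
begin

text \<open>
  Fix a proper colouring \<open>c\<close> of \<open>G\<close> with colours \<open>1..r\<close>. Call \<open>v \<notin> P\<close> in conflict with an adjacent
  \<open>w \<in> P\<close> if \<open>c v = d w\<close>. Keeping \<open>d\<close> on \<open>P\<close> and \<open>c\<close> elsewhere, but giving every conflicting \<open>v\<close> a new
  colour \<open>g w \<in> {r+1..r+k}\<close>, yields a proper colouring as soon as \<open>g\<close> separates the precoloured
  vertices at distance at most 3 (two conflicting vertices may be adjacent, or a conflicting vertex
  may be adjacent to a vertex precoloured \<open>r+1\<close>).
  If every vertex of \<open>P\<close> is that close to fewer than \<open>k\<close> others, \<open>g\<close> is found greedily. Otherwise
  some \<open>u \<in> P\<close> lies in at least \<open>k\<close> close pairs; deleting it leaves at most \<open>k(k-1)/2\<close> pairs, so by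
  induction \<open>P - {u}\<close> needs only \<open>r+k-1\<close> colours, and \<open>u\<close> is put back at the cost of one new colour.
  For \<open>k = 1\<close> there is at most one close pair \<open>{u,w}\<close>; permuting the colours of \<open>c\<close> so that
  \<open>u\<close> (or \<open>w\<close>) gets its precolour removes all its conflicts, and the single new colour suffices.
\<close>

lemma graphD:
  assumes "graph V E"
  shows "finite V" and "E u v \<Longrightarrow> u \<in> V" and "E u v \<Longrightarrow> v \<in> V"
    and "E u v \<Longrightarrow> E v u" and "\<not> E u u"
  using assms unfolding graph_def by auto

lemma proper_coloring_onD:
  assumes "proper_coloring_on S E f C"
  shows "v \<in> S \<Longrightarrow> f v \<in> C" and "u \<in> S \<Longrightarrow> v \<in> S \<Longrightarrow> E u v \<Longrightarrow> f u \<noteq> f v"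
  using assms unfolding proper_coloring_on_def by auto

lemma proper_coloring_on_mono:
  "proper_coloring_on S E f C \<Longrightarrow> T \<subseteq> S \<Longrightarrow> C \<subseteq> C' \<Longrightarrow> proper_coloring_on T E f C'"
  unfolding proper_coloring_on_def by blast

lemma proper_coloring_on_comp:
  "proper_coloring_on S E f C \<Longrightarrow> inj_on \<pi> C \<Longrightarrow> \<pi> ` C \<subseteq> C' \<Longrightarrow> proper_coloring_on S E (\<pi> \<circ> f) C'"
  unfolding proper_coloring_on_def by (auto simp: image_subset_iff dest: inj_onD)

lemma proper_coloring_on_recolor_vertex:
  assumes "proper_coloring_on S E f C" and "x \<in> S" and "a \<in> C"
  obtains f' where "proper_coloring_on S E f' C" and "f' x = a"
proof -
  let ?\<pi> = "Transposition.transpose (f x) a"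
  have "f x \<in> C" using assms(1,2) by (rule proper_coloring_onD(1))
  then have "?\<pi> ` C = C" using assms(3) by (intro transpose_image_eq) simp
  then have "proper_coloring_on S E (?\<pi> \<circ> f) C"
    using proper_coloring_on_comp[OF assms(1) inj_on_transpose] by simp
  moreover have "(?\<pi> \<circ> f) x = a" by simp
  ultimately show thesis by (rule that)
qed

definition close_neighbours :: "('a \<Rightarrow> 'a \<Rightarrow> bool) \<Rightarrow> 'a set \<Rightarrow> nat \<Rightarrow> 'a \<Rightarrow> 'a set" where
  "close_neighbours E P k u = {w \<in> P. {u, w} \<in> close_pairs E P k}"

lemma close_pairs_subset_Pow: "close_pairs E P k \<subseteq> Pow P"
  unfolding close_pairs_def by auto

lemma finite_close_pairs: "finite P \<Longrightarrow> finite (close_pairs E P k)"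
  by (rule finite_subset[OF close_pairs_subset_Pow]) simp

lemma close_pairs_mono: "Q \<subseteq> P \<Longrightarrow> close_pairs E Q k \<subseteq> close_pairs E P k"
  unfolding close_pairs_def by blast

lemma doubleton_in_close_pairsD: "{x, y} \<in> close_pairs E P k \<Longrightarrow> x \<in> P \<and> y \<in> P \<and> x \<noteq> y"
  unfolding close_pairs_def by (auto simp: doubleton_eq_iff)

lemma close_neighbours_sym: "y \<in> close_neighbours E P k x \<Longrightarrow> x \<in> close_neighbours E P k y"
  unfolding close_neighbours_def using doubleton_in_close_pairsD[of x y E P k] by (simp add: insert_commute)

lemma close_neighbours_irrefl: "x \<notin> close_neighbours E P k x"
  unfolding close_neighbours_def using doubleton_in_close_pairsD[of x x E P k] by auto

lemma finite_close_neighbours: "finite P \<Longrightarrow> finite (close_neighbours E P k x)"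
  unfolding close_neighbours_def by simp

lemma walk_imp_close_pair:
  assumes "x \<in> P" "y \<in> P" "x \<noteq> y" "walk E x y n" "n \<le> k"
  shows "{x, y} \<in> close_pairs E P k"
  using assms unfolding close_pairs_def dist_le_def by blast

lemma card_close_pairs_Diff_singleton:
  assumes "finite P"
  shows "card (close_pairs E (P - {u}) k) + card (close_neighbours E P k u) \<le> card (close_pairs E P k)"
proof -
  let ?D = "close_pairs E (P - {u}) k" and ?N = "close_neighbours E P k u"
  have D: "?D \<subseteq> close_pairs E P k" by (rule close_pairs_mono) blast
  have N: "(\<lambda>w. {u, w}) ` ?N \<subseteq> close_pairs E P k" unfolding close_neighbours_def by blast
  have disjoint: "?D \<inter> (\<lambda>w. {u, w}) ` ?N = {}" using close_pairs_subset_Pow by fastforce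
  have "inj_on (\<lambda>w. {u, w}) ?N" by (auto intro!: inj_onI simp: doubleton_eq_iff)
  then have "card ?D + card ?N = card (?D \<union> (\<lambda>w. {u, w}) ` ?N)"
    using D N disjoint finite_close_pairs[OF assms]
    by (simp add: card_Un_disjoint card_image finite_subset)
  also have "\<dots> \<le> card (close_pairs E P k)"
    using D N finite_close_pairs[OF assms] by (intro card_mono) auto
  finally show ?thesis .
qed

lemma greedy_coloring:
  fixes N :: "'a \<Rightarrow> 'a set"
  assumes "finite S"
    and small: "\<And>x. x \<in> S \<Longrightarrow> finite (N x) \<and> card (N x) < card C"
    and sym: "\<And>x y. y \<in> N x \<Longrightarrow> x \<in> N y" and irrefl: "\<And>x. x \<notin> N x"
  shows "\<exists>g. (\<forall>x\<in>S. g x \<in> C) \<and> (\<forall>x\<in>S. \<forall>y\<in>N x. g x \<noteq> g y) \<and> (\<forall>x. x \<notin> S \<longrightarrow> g x = h x)"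
  using assms(1) small
proof (induction S rule: finite_induct)
  case empty
  show ?case by auto
next
  case (insert x S)
  then obtain g where g: "\<forall>x\<in>S. g x \<in> C" "\<forall>x\<in>S. \<forall>y\<in>N x. g x \<noteq> g y" "\<forall>x. x \<notin> S \<longrightarrow> g x = h x"
    by auto
  have "finite (N x)" "card (N x) < card C" using insert.prems by auto
  then have "card (g ` N x) < card C" using card_image_le le_less_trans by blast
  then have "\<not> C \<subseteq> g ` N x" using \<open>finite (N x)\<close> card_mono leD by blast
  then obtain a where a: "a \<in> C" "a \<notin> g ` N x" by blast
  have "(g(x := a)) z \<noteq> (g(x := a)) y" if "z \<in> insert x S" "y \<in> N z" for z y
  proof (cases "z = x")
    case True
    then show ?thesis using that a irrefl by auto
  next
    case False
    then show ?thesis using that a g(2) sym by (cases "y = x") auto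
  qed
  then show ?case using g a insert.hyps(2) by (intro exI[of _ "g(x := a)"]) auto
qed

definition conflict ::
  "('a \<Rightarrow> 'a \<Rightarrow> bool) \<Rightarrow> 'a set \<Rightarrow> ('a \<Rightarrow> nat) \<Rightarrow> ('a \<Rightarrow> nat) \<Rightarrow> 'a \<Rightarrow> 'a \<Rightarrow> bool" where
  "conflict E P c d w v \<longleftrightarrow> w \<in> P \<and> v \<notin> P \<and> E w v \<and> c v = d w"

definition repair_coloring ::
  "('a \<Rightarrow> 'a \<Rightarrow> bool) \<Rightarrow> 'a set \<Rightarrow> ('a \<Rightarrow> nat) \<Rightarrow> ('a \<Rightarrow> nat) \<Rightarrow> ('a \<Rightarrow> nat) \<Rightarrow> 'a \<Rightarrow> nat" where
  "repair_coloring E P c d g v =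
     (if v \<in> P then d v
      else if \<exists>w. conflict E P c d w v then g (SOME w. conflict E P c d w v)
      else c v)"

lemma adjacent_conflicts_close_pair:
  assumes "graph V E" and "conflict E P c d w v" "conflict E P c d w' v'" "E v v'" "w \<noteq> w'"
  shows "{w, w'} \<in> close_pairs E P 3"
proof -
  have "walk E w w' (Suc (Suc (Suc 0)))"
    using assms(2-4) graphD(4)[OF assms(1)] unfolding conflict_def by (meson walk.intros)
  then show ?thesis using assms(2,3,5) unfolding conflict_def by (intro walk_imp_close_pair) auto
qed

lemma conflict_neighbour_close_pair:
  assumes "conflict E P c d w v" "p \<in> P" "E v p" "w \<noteq> p"
  shows "{w, p} \<in> close_pairs E P 3"
proof -
  have "walk E w p (Suc (Suc 0))" using assms(1,3) unfolding conflict_def by (meson walk.intros)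
  then show ?thesis using assms unfolding conflict_def by (intro walk_imp_close_pair) auto
qed

lemma conflict_precolour_in_palette:
  assumes "graph V E" and "proper_coloring_on V E c A" and "conflict E P c d w v"
  shows "d w \<in> A"
proof -
  have "v \<in> V" "c v = d w" using assms(3) graphD(3)[OF assms(1)] unfolding conflict_def by auto
  then show ?thesis using proper_coloring_onD(1)[OF assms(2)] by fastforce
qed

lemma no_conflict_at_agreeing_vertex:
  assumes "graph V E" and "P \<subseteq> V" and "proper_coloring_on V E c A" and "c w = d w"
  shows "\<not> conflict E P c d w v"
proof
  assume "conflict E P c d w v"
  then have "w \<in> V" "E w v" "c v = c w" using assms(2,4) unfolding conflict_def by auto
  then show False using proper_coloring_onD(2)[OF assms(3)] graphD(3)[OF assms(1)] by fastforce
qed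

context
  fixes E :: "'a \<Rightarrow> 'a \<Rightarrow> bool" and P :: "'a set" and c d g :: "'a \<Rightarrow> nat"
begin

lemma repair_coloring_precoloured [simp]: "v \<in> P \<Longrightarrow> repair_coloring E P c d g v = d v"
  unfolding repair_coloring_def by simp

lemma repair_coloring_cases:
  obtains (precoloured) "v \<in> P" "repair_coloring E P c d g v = d v"
  | (conflict) w where "conflict E P c d w v" "repair_coloring E P c d g v = g w"
  | (unchanged) "v \<notin> P" "\<forall>w. \<not> conflict E P c d w v" "repair_coloring E P c d g v = c v"
proof (cases "\<exists>w. conflict E P c d w v")
  case True
  then have "v \<notin> P" unfolding conflict_def by blast
  with True show thesis
    using conflict[OF someI_ex[OF True]] unfolding repair_coloring_def by simp
next
  case False
  then show thesis using precoloured unchanged unfolding repair_coloring_def by (cases "v \<in> P") auto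
qed

lemma repair_coloring_neq_precoloured:
  assumes G: "graph V E" and d: "proper_coloring_on P E d C"
    and conflict_next_to_P: "\<And>w v p. conflict E P c d w v \<Longrightarrow> p \<in> P \<Longrightarrow> E v p \<Longrightarrow> g w \<noteq> d p"
    and "a \<in> P" "E a b"
  shows "repair_coloring E P c d g a \<noteq> repair_coloring E P c d g b"
proof (cases rule: repair_coloring_cases[of b])
  case precoloured
  then show ?thesis using assms(4,5) proper_coloring_onD(2)[OF d] by simp
next
  case (conflict w)
  then show ?thesis
    using assms(4,5) conflict_next_to_P[OF conflict(1) assms(4)] graphD(4)[OF G] by simp
next
  case unchanged
  then show ?thesis using assms(4,5) unfolding conflict_def by auto
qed

lemma repair_coloring_neq_outside:
  assumes c: "proper_coloring_on V E c A"
    and g: "\<And>w v. conflict E P c d w v \<Longrightarrow> g w \<notin> A"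
    and adjacent_conflicts: "\<And>w v w' v'. conflict E P c d w v \<Longrightarrow> conflict E P c d w' v' \<Longrightarrow>
      E v v' \<Longrightarrow> w \<noteq> w' \<Longrightarrow> g w \<noteq> g w'"
    and ab: "a \<in> V - P" "b \<in> V - P" "E a b"
  shows "repair_coloring E P c d g a \<noteq> repair_coloring E P c d g b"
proof (cases rule: repair_coloring_cases[of a])
  case precoloured
  then show ?thesis using ab by simp
next
  case a: (conflict w)
  show ?thesis
  proof (cases rule: repair_coloring_cases[of b])
    case precoloured
    then show ?thesis using ab by simp
  next
    case (conflict w')
    have "c a \<noteq> c b" using ab proper_coloring_onD(2)[OF c] by simp
    then have "w \<noteq> w'" using a conflict unfolding conflict_def by auto
    then show ?thesis using a conflict adjacent_conflicts[OF a(1) conflict(1) ab(3)] by simp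
  next
    case unchanged
    then show ?thesis using a g[OF a(1)] proper_coloring_onD(1)[OF c] ab by auto
  qed
next
  case a: unchanged
  show ?thesis
  proof (cases rule: repair_coloring_cases[of b])
    case precoloured
    then show ?thesis using ab by simp
  next
    case (conflict w')
    have "c a \<in> A" using ab proper_coloring_onD(1)[OF c] by simp
    then show ?thesis using a conflict g[OF conflict(1)] by auto
  next
    case unchanged
    then show ?thesis using a ab proper_coloring_onD(2)[OF c] by simp
  qed
qed

lemma repair_coloring_proper:
  assumes G: "graph V E"
    and c: "proper_coloring_on V E c A" and d: "proper_coloring_on P E d C"
    and g: "\<And>w. w \<in> P \<Longrightarrow> g w \<in> C - A"
    and adjacent_conflicts: "\<And>w v w' v'. conflict E P c d w v \<Longrightarrow> conflict E P c d w' v' \<Longrightarrow>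
      E v v' \<Longrightarrow> w \<noteq> w' \<Longrightarrow> g w \<noteq> g w'"
    and conflict_next_to_P: "\<And>w v p. conflict E P c d w v \<Longrightarrow> p \<in> P \<Longrightarrow> E v p \<Longrightarrow> g w \<noteq> d p"
  shows "proper_coloring_on V E (repair_coloring E P c d g) (A \<union> C)"
proof -
  let ?f = "repair_coloring E P c d g"
  have g_outside: "g w \<notin> A" if "conflict E P c d w v" for w v
    using g that unfolding conflict_def by auto
  have range: "?f v \<in> A \<union> C" if "v \<in> V" for v
    by (cases rule: repair_coloring_cases[of v])
      (use that g proper_coloring_onD(1)[OF c] proper_coloring_onD(1)[OF d] in \<open>auto simp: conflict_def\<close>)
  have from_P: "?f a \<noteq> ?f b" if "a \<in> P" "E a b" for a b
    using G d conflict_next_to_P that by (rule repair_coloring_neq_precoloured)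
  have outside_P: "?f a \<noteq> ?f b" if "a \<in> V - P" "b \<in> V - P" "E a b" for a b
    using c g_outside adjacent_conflicts that by (rule repair_coloring_neq_outside)
  have "?f a \<noteq> ?f b" if "a \<in> V" "b \<in> V" "E a b" for a b
  proof (cases "a \<in> P \<or> b \<in> P")
    case True
    then show ?thesis using from_P[of a b] from_P[of b a] that graphD(4)[OF G] by metis
  next
    case False
    then show ?thesis using outside_P that by simp
  qed
  then show ?thesis using range unfolding proper_coloring_on_def by blast
qed

end

lemma precoloring_extension_sparse:
  assumes G: "graph V E" and "P \<subseteq> V"
    and c: "proper_coloring_on V E c {1..r}" and d: "proper_coloring_on P E d {1..r+1}"
    and "0 < k" and sparse: "\<And>u. u \<in> P \<Longrightarrow> card (close_neighbours E P 3 u) < k"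
  shows "\<exists>f. proper_coloring_on V E f {1..r+k} \<and> (\<forall>u\<in>P. f u = d u)"
proof -
  let ?N = "close_neighbours E P 3"
  define S where "S = {u \<in> P. d u \<noteq> r + 1}"
  have "finite P" using graphD(1)[OF G] \<open>P \<subseteq> V\<close> finite_subset by blast
  then have "\<exists>g. (\<forall>x\<in>S. g x \<in> {r+1..r+k}) \<and> (\<forall>x\<in>S. \<forall>y\<in>?N x. g x \<noteq> g y) \<and>
      (\<forall>x. x \<notin> S \<longrightarrow> g x = r + 1)"
    using sparse
    by (intro greedy_coloring)
      (auto simp: S_def close_neighbours_irrefl finite_close_neighbours intro: close_neighbours_sym)
  then obtain g where g_range: "\<forall>x\<in>S. g x \<in> {r+1..r+k}"
    and g_proper: "\<forall>x\<in>S. \<forall>y\<in>?N x. g x \<noteq> g y" and g_else: "\<forall>x. x \<notin> S \<longrightarrow> g x = r + 1"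
    by blast
  have conflict_in_S: "w \<in> S" "d w \<le> r" if "conflict E P c d w v" for w v
    using conflict_precolour_in_palette[OF G c that] that unfolding S_def conflict_def by auto
  have "proper_coloring_on V E (repair_coloring E P c d g) ({1..r} \<union> {1..r+k})"
  proof (rule repair_coloring_proper[OF G c])
    show "proper_coloring_on P E d {1..r+k}"
      using proper_coloring_on_mono[OF d subset_refl] \<open>0 < k\<close> by simp
    show "g w \<in> {1..r+k} - {1..r}" if "w \<in> P" for w
      using g_range g_else \<open>0 < k\<close> by (cases "w \<in> S") auto
  next
    fix w v w' v'
    assume cf: "conflict E P c d w v" "conflict E P c d w' v'" and "E v v'" "w \<noteq> w'"
    then have "w' \<in> ?N w"
      using adjacent_conflicts_close_pair[OF G cf] unfolding close_neighbours_def conflict_def by auto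
    then show "g w \<noteq> g w'" using g_proper conflict_in_S(1)[OF cf(1)] by blast
  next
    fix w v p
    assume cf: "conflict E P c d w v" and "p \<in> P" "E v p"
    show "g w \<noteq> d p"
    proof (cases "d p = r + 1")
      case True
      then have "w \<noteq> p" using conflict_in_S(2)[OF cf] by auto
      then have "p \<in> ?N w"
        using conflict_neighbour_close_pair[OF cf \<open>p \<in> P\<close> \<open>E v p\<close>] \<open>p \<in> P\<close>
        unfolding close_neighbours_def by auto
      moreover have "p \<notin> S" using True unfolding S_def by simp
      ultimately show ?thesis using g_proper g_else conflict_in_S(1)[OF cf] True by metis
    next
      case False
      then have "d p \<le> r" using proper_coloring_onD(1)[OF d \<open>p \<in> P\<close>] by auto
      then show ?thesis using g_range conflict_in_S(1)[OF cf] by fastforce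
    qed
  qed
  moreover have "{1..r} \<union> {1..r+k} = {1..r+k}" by auto
  ultimately show ?thesis by (intro exI[of _ "repair_coloring E P c d g"]) simp
qed

lemma precoloring_extension_one_close_pair:
  assumes G: "graph V E" and "P \<subseteq> V"
    and c: "proper_coloring_on V E c {1..r}" and d: "proper_coloring_on P E d {1..r+1}"
    and "card (close_pairs E P 3) \<le> 1"
  shows "\<exists>f. proper_coloring_on V E f {1..r+1} \<and> (\<forall>v\<in>P. f v = d v)"
proof -
  have "finite (close_pairs E P 3)"
    using graphD(1)[OF G] \<open>P \<subseteq> V\<close> finite_close_pairs finite_subset by blast
  then have single: "X = Y" if "X \<in> close_pairs E P 3" "Y \<in> close_pairs E P 3" for X Y
    using that \<open>card (close_pairs E P 3) \<le> 1\<close> card_le_Suc0_iff_eq by auto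
  obtain u w where uw: "\<forall>X\<in>close_pairs E P 3. X = {u, w}"
  proof (cases "close_pairs E P 3 = {}")
    case False
    then obtain X where "X \<in> close_pairs E P 3" by blast
    moreover from this obtain u w where "X = {u, w}" unfolding close_pairs_def by blast
    ultimately show thesis using that single by blast
  qed blast
  have no_conflict_high: "\<not> conflict E P c' d x v"
    if "proper_coloring_on V E c' {1..r}" "\<not> (x \<in> P \<and> d x \<le> r)" for c' x v
    using conflict_precolour_in_palette[OF G that(1), of P d x v] that(2)
    unfolding conflict_def by auto
  have agree: "\<exists>c'. proper_coloring_on V E c' {1..r} \<and> (\<forall>v. \<not> conflict E P c' d x v)"
    if "x \<in> P" "d x \<le> r" for x
  proof -
    have "d x \<in> {1..r}" using proper_coloring_onD(1)[OF d \<open>x \<in> P\<close>] that(2) by auto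
    then obtain c' where "proper_coloring_on V E c' {1..r}" "c' x = d x"
      using proper_coloring_on_recolor_vertex[OF c] \<open>x \<in> P\<close> \<open>P \<subseteq> V\<close> by blast
    then show ?thesis using no_conflict_at_agreeing_vertex[OF G \<open>P \<subseteq> V\<close>] by blast
  qed
  obtain c' x y where c': "proper_coloring_on V E c' {1..r}" and xy: "{x, y} = {u, w}"
    and free_x: "\<forall>v. \<not> conflict E P c' d x v"
    and free_y: "d x = r + 1 \<Longrightarrow> \<forall>v. \<not> conflict E P c' d y v"
  proof -
    consider "u \<in> P" "d u \<le> r" | "w \<in> P" "d w \<le> r" | "\<not> (u \<in> P \<and> d u \<le> r)" "\<not> (w \<in> P \<and> d w \<le> r)"
      by blast
    then show thesis
    proof cases
      case 1
      then show thesis using that[of _ u w] agree[OF 1] by fastforce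
    next
      case 2
      then show thesis using that[of _ w u] agree[OF 2] by (fastforce simp: insert_commute)
    next
      case 3
      then show thesis using that[OF c, of u w] no_conflict_high[OF c] by blast
    qed
  qed
  have "proper_coloring_on V E (repair_coloring E P c' d (\<lambda>_. r + 1)) ({1..r} \<union> {1..r+1})"
  proof (rule repair_coloring_proper[OF G c' d])
    fix w1 v w2 v'
    assume cf: "conflict E P c' d w1 v" "conflict E P c' d w2 v'" "E v v'" "w1 \<noteq> w2"
    then have "{w1, w2} = {x, y}" using adjacent_conflicts_close_pair[OF G cf] uw xy by auto
    then show "r + 1 \<noteq> r + 1" using cf free_x by (auto simp: doubleton_eq_iff)
  next
    fix w1 v p
    assume cf: "conflict E P c' d w1 v" and "p \<in> P" "E v p"
    show "r + 1 \<noteq> d p"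
    proof
      assume "r + 1 = d p"
      moreover have "d w1 \<in> {1..r}" using conflict_precolour_in_palette[OF G c' cf] .
      ultimately have "w1 \<noteq> p" by auto
      then have "{w1, p} = {x, y}"
        using conflict_neighbour_close_pair[OF cf \<open>p \<in> P\<close> \<open>E v p\<close>] uw xy by auto
      then show False using cf free_x free_y \<open>r + 1 = d p\<close> by (auto simp: doubleton_eq_iff)
    qed
  qed auto
  moreover have "{1..r} \<union> {1..r+1} = {1..r+1}" by auto
  ultimately show ?thesis by (intro exI[of _ "repair_coloring E P c' d (\<lambda>_. r + 1)"]) simp
qed

lemma precoloring_extension_insert_colour:
  assumes G: "graph V E" and "u \<in> P"
    and d: "proper_coloring_on P E d C"
    and f: "proper_coloring_on V E f C" and agree: "\<forall>v\<in>P - {u}. f v = d v"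
    and "a \<notin> C"
  shows "\<exists>f'. proper_coloring_on V E f' (insert a C) \<and> (\<forall>v\<in>P. f' v = d v)"
proof -
  define f' where "f' v = (if v = u then d u else if v \<notin> P \<and> E u v \<and> f v = d u then a else f v)" for v
  have du: "d u \<in> C" using proper_coloring_onD(1)[OF d \<open>u \<in> P\<close>] .
  have range: "f' v \<in> insert a C" if "v \<in> V" for v
    using du proper_coloring_onD(1)[OF f that] unfolding f'_def by auto
  have at_u: "f' u \<noteq> f' b" if "E u b" for b
  proof (cases "b \<in> P")
    case True
    then show ?thesis
      using that agree proper_coloring_onD(2)[OF d \<open>u \<in> P\<close> True] graphD(5)[OF G]
      unfolding f'_def by auto
  next
    case False
    then show ?thesis using that du \<open>a \<notin> C\<close> \<open>u \<in> P\<close> unfolding f'_def by auto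
  qed
  have away_from_u: "f' x \<noteq> f' y" if "x \<in> V" "y \<in> V" "E x y" "x \<noteq> u" "y \<noteq> u" for x y
    using proper_coloring_onD(2)[OF f that(1-3)] proper_coloring_onD(1)[OF f] that \<open>a \<notin> C\<close>
    unfolding f'_def by auto
  have "f' x \<noteq> f' y" if "x \<in> V" "y \<in> V" "E x y" for x y
    using at_u[of y] at_u[of x] away_from_u[OF that] that graphD(4)[OF G] by metis
  then have "proper_coloring_on V E f' (insert a C)" using range unfolding proper_coloring_on_def by blast
  moreover have "\<forall>v\<in>P. f' v = d v" using agree unfolding f'_def by auto
  ultimately show ?thesis by blast
qed

lemma precoloring_extension:
  assumes G: "graph V E" and c: "proper_coloring_on V E c {1..r}"
  shows "1 \<le> k \<Longrightarrow> P \<subseteq> V \<Longrightarrow> 2 * card (close_pairs E P 3) \<le> k * (k + 1) \<Longrightarrow>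
    proper_coloring_on P E d {1..r+1} \<Longrightarrow> \<exists>f. proper_coloring_on V E f {1..r+k} \<and> (\<forall>u\<in>P. f u = d u)"
proof (induction k arbitrary: P rule: nat_induct_at_least)
  case base
  then show ?case using precoloring_extension_one_close_pair[OF G _ c] by simp
next
  case (Suc k)
  let ?N = "close_neighbours E P 3"
  show ?case
  proof (cases "\<forall>u\<in>P. card (?N u) < Suc k")
    case True
    then show ?thesis using precoloring_extension_sparse[OF G Suc.prems(1) c Suc.prems(3)] by blast
  next
    case False
    then obtain u where "u \<in> P" and u_deg: "Suc k \<le> card (?N u)" by (auto simp: not_less)
    have "finite P" using graphD(1)[OF G] Suc.prems(1) finite_subset by blast
    then have "2 * card (close_pairs E (P - {u}) 3) \<le> k * (k + 1)"
      using card_close_pairs_Diff_singleton[of P E u 3] u_deg Suc.prems(2) by (simp add: algebra_simps)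
    moreover have "proper_coloring_on (P - {u}) E d {1..r+1}"
      using Suc.prems(3) by (rule proper_coloring_on_mono) auto
    ultimately obtain f where "proper_coloring_on V E f {1..r+k}" "\<forall>v\<in>P - {u}. f v = d v"
      using Suc.IH[of "P - {u}"] Suc.prems(1) by blast
    moreover have "proper_coloring_on P E d {1..r+k}"
      using proper_coloring_on_mono[OF Suc.prems(3) subset_refl] \<open>1 \<le> k\<close> by simp
    ultimately have "\<exists>f'. proper_coloring_on V E f' (insert (r + Suc k) {1..r+k}) \<and> (\<forall>v\<in>P. f' v = d v)"
      using \<open>u \<in> P\<close> by (intro precoloring_extension_insert_colour[OF G]) auto
    moreover have "insert (r + Suc k) {1..r+k} = {1..r + Suc k}" by auto
    ultimately show ?thesis by simp
  qed
qed

theorem theorem1: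
  fixes V :: "'a set" and E :: "'a \<Rightarrow> 'a \<Rightarrow> bool" and P :: "'a set"
    and k r :: nat and d :: "'a \<Rightarrow> nat"
  assumes "graph V E"
    and "k > 0" and "r > 0"
    and "chromatic_le V E r"
    and "P \<subseteq> V"
    and "2 * card (close_pairs E P 3) \<le> k * (k + 1)"
    and "proper_coloring_on P E d {1..r+1}"
  shows "\<exists>f. proper_coloring_on V E f {1..r+k} \<and> (\<forall>u\<in>P. f u = d u)"
proof -
  obtain c where "proper_coloring_on V E c {1..r}"
    using \<open>chromatic_le V E r\<close> unfolding chromatic_le_def by blast
  then show ?thesis
    using precoloring_extension[OF \<open>graph V E\<close>] assms(2,5-7) by simp
qed

end
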